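(* Let $n>3$ be an integer and let $L(n)$ be the graph defined in the context below. Then $-1$ and $n-2$ are eigenvalues of $L(n)$ (i.e., of its adjacency matrix).
   Context: Let $[n]=\{1,2,\dots,n\}$. Let $H(n)$ be the graph whose vertex set is $\{v : v\subseteq [n],\ |v|\in\{1,2\}\}$, where two vertices $v,w$ are adjacent if and only if $v\subset w$ or $w\subset v$ (equivalently, $H(n)$ is the subgraph of the hypercube $Q_n$ induced by the vertices of weight $1$ and $2$). Let $L(n)$ be the line graph of $H(n)$: its vertices are the edges $\{\{i\},\{i,j\}\}$ of $H(n)$ (with $i\neq j$ in $[n]$), denoted $[i,ij]$, and two such vertices are adjacent iff, as edges of $H(n)$, they share exactly one endpoint. The eigenvalues of a graph are the eigenvalues of its adjacency matrix. *)

theory Defs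
  imports Main "Jordan_Normal_Form.Char_Poly"
begin

definition H_vertices :: "nat \<Rightarrow> nat set set" where
  "H_vertices n = {v. v \<subseteq> {1..n} \<and> card v \<in> {1,2}}"

definition H_adj :: "nat set \<Rightarrow> nat set \<Rightarrow> bool" where
  "H_adj v w \<longleftrightarrow> v \<subset> w \<or> w \<subset> v"

text \<open>Edges of H(n), each edge being the 2-element set of its endpoints.
  These are the vertices of the line graph L(n).\<close>
definition H_edges :: "nat \<Rightarrow> nat set set set" where
  "H_edges n = {{v, w} | v w. v \<in> H_vertices n \<and> w \<in> H_vertices n \<and> H_adj v w}"

definition L_adj :: "nat set set \<Rightarrow> nat set set \<Rightarrow> bool" where
  "L_adj e f \<longleftrightarrow> card (e \<inter> f) = 1"

text \<open>A fixed (arbitrary) enumeration of the vertices of L(n); the spectrum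
  of the adjacency matrix does not depend on the chosen ordering.\<close>
definition L_vertex_list :: "nat \<Rightarrow> nat set set list" where
  "L_vertex_list n = (SOME xs. distinct xs \<and> set xs = H_edges n)"

definition L_adj_matrix :: "nat \<Rightarrow> real mat" where
  "L_adj_matrix n = (let xs = L_vertex_list n in
     mat (length xs) (length xs)
       (\<lambda>(a, b). if L_adj (xs ! a) (xs ! b) then 1 else 0))"

end

theory Submission
  imports Defs
begin

text \<open>The vertex [i,ij] of L(n) is encoded by the ordered pair (i,j). Its neighbours are the
  vertices [i,il] with l \<notin> {i,j}, sharing the endpoint {i}, and [j,ij], sharing {i,j}. Hence
  a function g on pairs is an eigenvector for k iff
  \<open>(\<Sum>l \<in> [n]-{i,j}. g i l) + g j i = k * g i j\<close> for all i \<noteq> j.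
  For any f with \<open>\<Sum>l\<in>[n]. f l = 0\<close>, the functions g i j = f j and g i j = (n-1) f i + f j
  satisfy this with k = -1 and k = n-2 respectively; f = [l = 1] - [l = 2] makes both nonzero.\<close>

lemma eigenvalue_adjacency_matrixI:
  fixes x :: "'a \<Rightarrow> real" and adj :: "'a \<Rightarrow> 'a \<Rightarrow> bool"
  assumes xs: "distinct xs" "set xs = V"
    and eigen: "\<And>e. e \<in> V \<Longrightarrow> (\<Sum>f\<in>V. if adj e f then x f else 0) = k * x e"
    and nonzero: "u \<in> V" "x u \<noteq> 0"
  shows "eigenvalue (mat (length xs) (length xs) (\<lambda>(a, b). if adj (xs ! a) (xs ! b) then 1 else 0)) k"
proof -
  let ?A = "mat (length xs) (length xs) (\<lambda>(a, b). if adj (xs ! a) (xs ! b) then 1 else (0::real))"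
  define v where "v = vec (length xs) (\<lambda>a. x (xs ! a))"
  have bij: "bij_betw ((!) xs) {..<length xs} V"
    using bij_betw_nth[of xs "{..<length xs}" V] xs by simp
  have "?A *\<^sub>v v = k \<cdot>\<^sub>v v"
  proof (rule eq_vecI)
    fix a assume "a < dim_vec (k \<cdot>\<^sub>v v)"
    then have a: "a < length xs" by (simp add: v_def)
    have "(?A *\<^sub>v v) $ a = (\<Sum>b<length xs. (if adj (xs ! a) (xs ! b) then 1 else 0) * x (xs ! b))"
      using a by (simp add: v_def scalar_prod_def atLeast0LessThan)
    also have "\<dots> = (\<Sum>f\<in>V. (if adj (xs ! a) f then 1 else 0) * x f)"
      by (rule sum.reindex_bij_betw[OF bij])
    also have "\<dots> = (\<Sum>f\<in>V. if adj (xs ! a) f then x f else 0)"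
      by (rule sum.cong) auto
    also have "\<dots> = k * x (xs ! a)"
      using eigen a xs by auto
    finally show "(?A *\<^sub>v v) $ a = (k \<cdot>\<^sub>v v) $ a"
      using a by (simp add: v_def)
  qed (simp add: v_def)
  moreover have "v \<noteq> 0\<^sub>v (length xs)"
  proof
    assume "v = 0\<^sub>v (length xs)"
    moreover obtain i where "i < length xs" "xs ! i = u"
      using nonzero xs by (metis in_set_conv_nth)
    ultimately show False
      using nonzero by (metis index_vec index_zero_vec(1) v_def)
  qed
  ultimately show ?thesis
    unfolding eigenvalue_def eigenvector_def by (intro exI[of _ v]) (simp add: v_def)
qed

definition flag_edge :: "nat \<Rightarrow> nat \<Rightarrow> nat set set" where
  "flag_edge i j = {{i}, {i, j}}"

definition distinct_pairs :: "nat \<Rightarrow> (nat \<times> nat) set" where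
  "distinct_pairs n = {(i, j). i \<in> {1..n} \<and> j \<in> {1..n} \<and> i \<noteq> j}"

lemma finite_distinct_pairs: "finite (distinct_pairs n)"
  unfolding distinct_pairs_def by (rule finite_subset[of _ "{1..n} \<times> {1..n}"]) auto

lemma H_edge_flag_edge:
  assumes "v \<in> H_vertices n" "w \<in> H_vertices n" "v \<subset> w"
  obtains i j where "(i, j) \<in> distinct_pairs n" "{v, w} = flag_edge i j"
proof -
  have "finite w"
    using assms(2) unfolding H_vertices_def by (auto intro: finite_subset)
  then have "card v < card w"
    using assms(3) by (rule psubset_card_mono)
  then have "card v = 1" "card w = 2"
    using assms(1,2) unfolding H_vertices_def by auto
  then obtain i a b where "v = {i}" "w = {a, b}" "a \<noteq> b"
    by (metis card_1_singletonE card_2_iff)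
  moreover have "i \<in> w"
    using \<open>v = {i}\<close> assms(3) by auto
  ultimately obtain j where "v = {i}" "w = {i, j}" "i \<noteq> j"
    by auto
  moreover from this have "(i, j) \<in> distinct_pairs n"
    using assms(2) unfolding H_vertices_def distinct_pairs_def by auto
  ultimately show ?thesis
    using that unfolding flag_edge_def by blast
qed

lemma H_edges_eq_flag_edges: "H_edges n = case_prod flag_edge ` distinct_pairs n"
proof (intro equalityI subsetI)
  fix e assume "e \<in> H_edges n"
  then obtain v w where e: "e = {v, w}" "v \<in> H_vertices n" "w \<in> H_vertices n" "v \<subset> w \<or> w \<subset> v"
    unfolding H_edges_def H_adj_def by blast
  have "\<exists>i j. (i, j) \<in> distinct_pairs n \<and> e = flag_edge i j"
    using e(4)
  proof
    assume "v \<subset> w"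
    then show ?thesis
      using H_edge_flag_edge[OF e(2,3)] e(1) by metis
  next
    assume "w \<subset> v"
    then show ?thesis
      using H_edge_flag_edge[OF e(3,2)] e(1) by (metis insert_commute)
  qed
  then show "e \<in> case_prod flag_edge ` distinct_pairs n"
    by force
next
  fix e assume "e \<in> case_prod flag_edge ` distinct_pairs n"
  then obtain i j where ij: "e = flag_edge i j" "(i, j) \<in> distinct_pairs n"
    by auto
  then have "{i} \<in> H_vertices n" "{i, j} \<in> H_vertices n" "H_adj {i} {i, j}"
    unfolding H_vertices_def H_adj_def distinct_pairs_def by auto
  then show "e \<in> H_edges n"
    unfolding H_edges_def ij(1) flag_edge_def by blast
qed

lemma flag_edge_eq_iff:
  assumes "i \<noteq> j" "k \<noteq> l"
  shows "flag_edge i j = flag_edge k l \<longleftrightarrow> i = k \<and> j = l"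
  using assms unfolding flag_edge_def by (auto simp: doubleton_eq_iff)

lemma inj_on_flag_edge: "inj_on (case_prod flag_edge) (distinct_pairs n)"
  by (rule inj_onI) (auto simp: distinct_pairs_def flag_edge_eq_iff)

lemma L_adj_flag_edge:
  assumes "i \<noteq> j" "k \<noteq> l"
  shows "L_adj (flag_edge i j) (flag_edge k l) \<longleftrightarrow> (k = i \<and> l \<noteq> j) \<or> (k = j \<and> l = i)"
proof -
  have "flag_edge i j \<inter> flag_edge k l =
      (if k = i then (if l = j then {{i}, {i, j}} else {{i}}) else if k = j \<and> l = i then {{i, j}} else {})"
    using assms unfolding flag_edge_def by (auto simp: doubleton_eq_iff)
  moreover have "{i} \<noteq> {i, j}"
    using assms by auto
  ultimately show ?thesis
    unfolding L_adj_def by auto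
qed

lemma sum_L_neighbours:
  fixes g :: "nat \<Rightarrow> nat \<Rightarrow> real"
  assumes ij: "(i, j) \<in> distinct_pairs n"
  shows "(\<Sum>(k, l)\<in>distinct_pairs n. if L_adj (flag_edge i j) (flag_edge k l) then g k l else 0)
    = (\<Sum>l\<in>{1..n} - {i, j}. g i l) + g j i"
proof -
  let ?N = "{(k, l) \<in> distinct_pairs n. (k = i \<and> l \<noteq> j) \<or> (k = j \<and> l = i)}"
  have N: "?N = insert (j, i) (Pair i ` ({1..n} - {i, j}))"
    using ij unfolding distinct_pairs_def by auto
  have "(\<Sum>(k, l)\<in>distinct_pairs n. if L_adj (flag_edge i j) (flag_edge k l) then g k l else 0)
      = (\<Sum>(k, l)\<in>distinct_pairs n. if (k = i \<and> l \<noteq> j) \<or> (k = j \<and> l = i) then g k l else 0)"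
    using ij by (intro sum.cong) (auto simp: distinct_pairs_def L_adj_flag_edge)
  also have "\<dots> = (\<Sum>(k, l)\<in>?N. g k l)"
    by (simp add: sum.inter_filter[OF finite_distinct_pairs] case_prod_unfold if_distrib)
  also have "\<dots> = g j i + (\<Sum>l\<in>{1..n} - {i, j}. g i l)"
    unfolding N by (subst sum.insert) (auto simp: sum.reindex inj_on_def)
  finally show ?thesis
    by simp
qed

lemma eigenvalue_L_adj_matrixI:
  fixes g :: "nat \<Rightarrow> nat \<Rightarrow> real"
  assumes eigen: "\<And>i j. (i, j) \<in> distinct_pairs n \<Longrightarrow> (\<Sum>l\<in>{1..n} - {i, j}. g i l) + g j i = k * g i j"
    and nonzero: "(a, b) \<in> distinct_pairs n" "g a b \<noteq> 0"
  shows "eigenvalue (L_adj_matrix n) k"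
proof -
  let ?F = "case_prod flag_edge" and ?P = "distinct_pairs n"
  define x where "x e = case_prod g (the_inv_into ?P ?F e)" for e
  have x_flag_edge: "x (flag_edge i j) = g i j" if "(i, j) \<in> ?P" for i j
    using the_inv_into_f_f[OF inj_on_flag_edge that] by (simp add: x_def)
  have "finite (H_edges n)"
    by (simp add: H_edges_eq_flag_edges finite_distinct_pairs)
  then obtain ys where "distinct ys \<and> set ys = H_edges n"
    using finite_distinct_list by metis
  then have xs: "distinct (L_vertex_list n) \<and> set (L_vertex_list n) = H_edges n"
    unfolding L_vertex_list_def by (rule someI)
  show ?thesis
    unfolding L_adj_matrix_def Let_def
  proof (rule eigenvalue_adjacency_matrixI[where x = x and u = "flag_edge a b"])
    fix e assume "e \<in> H_edges n"
    then obtain i j where ij: "(i, j) \<in> ?P" "e = flag_edge i j"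
      unfolding H_edges_eq_flag_edges by auto
    have "(\<Sum>f\<in>H_edges n. if L_adj e f then x f else 0)
        = (\<Sum>(k, l)\<in>?P. if L_adj (flag_edge i j) (flag_edge k l) then g k l else 0)"
      unfolding H_edges_eq_flag_edges sum.reindex[OF inj_on_flag_edge] ij(2)
      by (intro sum.cong) (auto simp: x_flag_edge)
    also have "\<dots> = (\<Sum>l\<in>{1..n} - {i, j}. g i l) + g j i"
      by (rule sum_L_neighbours[OF ij(1)])
    also have "\<dots> = k * x e"
      using eigen[OF ij(1)] x_flag_edge[OF ij(1)] ij(2) by simp
    finally show "(\<Sum>f\<in>H_edges n. if L_adj e f then x f else 0) = k * x e" .
  qed (use xs nonzero x_flag_edge H_edges_eq_flag_edges in auto)
qed

lemma sum_Diff_pair_zero_sum: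
  fixes f :: "nat \<Rightarrow> real"
  assumes "(\<Sum>l\<in>{1..n}. f l) = 0" "(i, j) \<in> distinct_pairs n"
  shows "(\<Sum>l\<in>{1..n} - {i, j}. f l) = - f i - f j"
  using assms by (simp add: sum_diff distinct_pairs_def)

lemma L_eigenvalue_minus_one:
  fixes f :: "nat \<Rightarrow> real"
  assumes "(\<Sum>l\<in>{1..n}. f l) = 0" "(a, b) \<in> distinct_pairs n" "f b \<noteq> 0"
  shows "eigenvalue (L_adj_matrix n) (-1)"
  by (rule eigenvalue_L_adj_matrixI[where g = "\<lambda>i j. f j"])
    (use assms sum_Diff_pair_zero_sum in auto)

lemma L_eigenvalue_n_minus_two:
  fixes f :: "nat \<Rightarrow> real"
  assumes zero_sum: "(\<Sum>l\<in>{1..n}. f l) = 0"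
    and nonzero: "(a, b) \<in> distinct_pairs n" "(real n - 1) * f a + f b \<noteq> 0"
  shows "eigenvalue (L_adj_matrix n) (real n - 2)"
proof (rule eigenvalue_L_adj_matrixI[where g = "\<lambda>i j. (real n - 1) * f i + f j", OF _ nonzero])
  fix i j assume ij: "(i, j) \<in> distinct_pairs n"
  then have "card ({1..n} - {i, j}) = n - 2" "n \<ge> 2"
    by (auto simp: distinct_pairs_def card_Diff_subset)
  then have "(\<Sum>l\<in>{1..n} - {i, j}. (real n - 1) * f i + f l)
      = (real n - 2) * (real n - 1) * f i - f i - f j"
    using sum_Diff_pair_zero_sum[OF zero_sum ij] by (simp add: sum.distrib of_nat_diff)
  then show "(\<Sum>l\<in>{1..n} - {i, j}. (real n - 1) * f i + f l) + ((real n - 1) * f j + f i)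
      = (real n - 2) * ((real n - 1) * f i + f j)"
    by (simp add: algebra_simps)
qed

theorem proposition3p3:
  fixes n :: nat
  assumes "n > 3"
  shows "eigenvalue (L_adj_matrix n) (-1) \<and> eigenvalue (L_adj_matrix n) (real n - 2)"
proof -
  define f :: "nat \<Rightarrow> real" where "f l = of_bool (l = 1) - of_bool (l = 2)" for l
  have "(\<Sum>l\<in>{1..n}. f l) = 0"
    using assms by (simp add: f_def sum_subtractf)
  moreover have "(1, 2) \<in> distinct_pairs n"
    using assms by (simp add: distinct_pairs_def)
  ultimately show ?thesis
    using assms L_eigenvalue_minus_one L_eigenvalue_n_minus_two by (simp add: f_def)
qed

end
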